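(* Let $n\ge1$, let $\mathcal{C}_{\text{Pauli}}$ be an $n$-qubit Pauli channel, and let $\mathcal{E}=\{(p_i,U_i)\}_{i=0}^{K-1}$ be a Pauli mixing unitary ensemble. Then $\mathbb{E}_{\mathcal{E}}(\mathcal{C}_{\text{Pauli}})=\mathcal{D}_{F(\mathcal{C}_{\text{Pauli}})}$.
   Context: $\mathcal{P}_n$ is the $n$-qubit Pauli group (tensor products of $I,X,Y,Z$ with phases in $\{\pm1,\pm i\}$), $\mathcal{Q}_n=\{P_a\}_{a=0}^{4^n-1}$ is the set of phase-free Pauli operators $X_{\vec x}Z_{\vec z}$ with $P_0=I^{\otimes n}$, $\mathcal{Q}_n^*=\mathcal{Q}_n\setminus\{I^{\otimes n}\}$, and $\pi:\mathcal{P}_n\to\mathcal{Q}_n$ removes the phase. A Pauli channel is $\mathcal{C}_{\text{Pauli}}(\rho)=\sum_a\chi_{aa}P_a\rho P_a$ with $\chi_{aa}\ge0$, $\sum_a\chi_{aa}=1$; its entanglement fidelity is $F(\mathcal{C}_{\text{Pauli}})=\chi_{00}$ (in general $F(\mathcal{C})=\langle\Phi_n|(\mathcal{I}\otimes\mathcal{C})(|\Phi_n\rangle\langle\Phi_n|)|\Phi_n\rangle$, $|\Phi_n\rangle=2^{-n/2}\sum_{\vec k}|\vec k\rangle|\vec k\rangle$). An ensemble $\mathcal{E}=\{(p_i,U_i)\}$ (probabilities $p_i$, unitaries $U_i$) is Pauli mixing if each $U_i$ satisfies $U_i^\dagger PU_i\in\mathcal{P}_n$ for all $P\in\mathcal{P}_n$,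 and for all $P,P'\in\mathcal{Q}_n^*$, $\sum_{i:\pi(U_i^\dagger PU_i)=P'}p_i=\frac{1}{4^n-1}$. The twirl is $\mathbb{E}_{\mathcal{E}}(\mathcal{C})(\rho)=\sum_ip_iU_i^\dagger\mathcal{C}(U_i\rho U_i^\dagger)U_i$, and $\mathcal{D}_p(\varphi)=p\varphi+\frac{1-p}{4^n-1}\sum_{P\in\mathcal{Q}_n^*}P\varphi P$. *)

theory Defs
  imports Complex_Main "Jordan_Normal_Form.Matrix"
begin

definition adj :: "complex mat \<Rightarrow> complex mat" where
  "adj A = mat (dim_col A) (dim_row A) (\<lambda>(i,j). cnj (A $$ (j,i)))"

definition kron :: "complex mat \<Rightarrow> complex mat \<Rightarrow> complex mat" where
  "kron A B = mat (dim_row A * dim_row B) (dim_col A * dim_col B)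
     (\<lambda>(i,j). A $$ (i div dim_row B, j div dim_col B) * B $$ (i mod dim_row B, j mod dim_col B))"

definition msum :: "nat \<Rightarrow> ('b \<Rightarrow> complex mat) \<Rightarrow> 'b set \<Rightarrow> complex mat" where
  "msum d f S = mat d d (\<lambda>ij. \<Sum>x\<in>S. f x $$ ij)"

(* single-qubit Paulis: 0 = I, 1 = X, 2 = Y, 3 = Z *)
definition pauli1 :: "nat \<Rightarrow> complex mat" where
  "pauli1 k = (if k = 0 then mat_of_rows_list 2 [[1,0],[0,1]]
     else if k = 1 then mat_of_rows_list 2 [[0,1],[1,0]]
     else if k = 2 then mat_of_rows_list 2 [[0,-\<i>],[\<i>,0]]
     else mat_of_rows_list 2 [[1,0],[0,-1]])"

definition pauli_string :: "nat list \<Rightarrow> complex mat" where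
  "pauli_string l = foldr (\<lambda>k M. kron (pauli1 k) M) l (1\<^sub>m 1)"

definition Qn :: "nat \<Rightarrow> complex mat set" where
  "Qn n = {pauli_string l | l. length l = n \<and> set l \<subseteq> {0,1,2,3}}"

definition Qn_star :: "nat \<Rightarrow> complex mat set" where
  "Qn_star n = Qn n - {1\<^sub>m (2^n)}"

definition phases :: "complex set" where
  "phases = {1, -1, \<i>, -\<i>}"

definition Pn :: "nat \<Rightarrow> complex mat set" where
  "Pn n = {c \<cdot>\<^sub>m P | c P. c \<in> phases \<and> P \<in> Qn n}"

definition pi_phase :: "nat \<Rightarrow> complex mat \<Rightarrow> complex mat" where
  "pi_phase n M = (THE P. P \<in> Qn n \<and> (\<exists>c\<in>phases. M = c \<cdot>\<^sub>m P))"

definition unitary_mat :: "nat \<Rightarrow> complex mat \<Rightarrow> bool" where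
  "unitary_mat d U \<longleftrightarrow> U \<in> carrier_mat d d \<and> U * adj U = 1\<^sub>m d"

definition pauli_channel :: "nat \<Rightarrow> (complex mat \<Rightarrow> real) \<Rightarrow> complex mat \<Rightarrow> complex mat" where
  "pauli_channel n chi \<rho> = msum (2^n) (\<lambda>P. complex_of_real (chi P) \<cdot>\<^sub>m (P * \<rho> * P)) (Qn n)"

definition is_pauli_channel_coeffs :: "nat \<Rightarrow> (complex mat \<Rightarrow> real) \<Rightarrow> bool" where
  "is_pauli_channel_coeffs n chi \<longleftrightarrow> (\<forall>P\<in>Qn n. chi P \<ge> 0) \<and> (\<Sum>P\<in>Qn n. chi P) = 1"

definition pauli_mixing :: "nat \<Rightarrow> nat \<Rightarrow> (nat \<Rightarrow> real) \<Rightarrow> (nat \<Rightarrow> complex mat) \<Rightarrow> bool" where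
  "pauli_mixing n K p U \<longleftrightarrow>
     (\<forall>i<K. p i \<ge> 0) \<and> (\<Sum>i<K. p i) = 1 \<and>
     (\<forall>i<K. unitary_mat (2^n) (U i)) \<and>
     (\<forall>i<K. \<forall>P\<in>Pn n. adj (U i) * P * U i \<in> Pn n) \<and>
     (\<forall>P\<in>Qn_star n. \<forall>P'\<in>Qn_star n.
        (\<Sum>i\<in>{i. i < K \<and> pi_phase n (adj (U i) * P * U i) = P'}. p i) = 1 / (4^n - 1))"

definition twirl :: "nat \<Rightarrow> nat \<Rightarrow> (nat \<Rightarrow> real) \<Rightarrow> (nat \<Rightarrow> complex mat)
    \<Rightarrow> (complex mat \<Rightarrow> complex mat) \<Rightarrow> complex mat \<Rightarrow> complex mat" where
  "twirl n K p U C \<rho> = msum (2^n)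
     (\<lambda>i. complex_of_real (p i) \<cdot>\<^sub>m (adj (U i) * C (U i * \<rho> * adj (U i)) * U i)) {..<K}"

definition depol :: "nat \<Rightarrow> complex \<Rightarrow> complex mat \<Rightarrow> complex mat" where
  "depol n q \<phi> = q \<cdot>\<^sub>m \<phi> + ((1 - q) / (4^n - 1)) \<cdot>\<^sub>m msum (2^n) (\<lambda>P. P * \<phi> * P) (Qn_star n)"

(* (I \<otimes> C)(M) for M of dimension d*d, first tensor factor = block index *)
definition id_tensor :: "nat \<Rightarrow> (complex mat \<Rightarrow> complex mat) \<Rightarrow> complex mat \<Rightarrow> complex mat" where
  "id_tensor d C M = mat (d*d) (d*d) (\<lambda>(r,s).
      C (mat d d (\<lambda>(a,b). M $$ ((r div d) * d + a, (s div d) * d + b))) $$ (r mod d, s mod d))"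

(* |Phi_n> = 2^{-n/2} sum_k |k>|k>, as a column matrix *)
definition Phi :: "nat \<Rightarrow> complex mat" where
  "Phi n = mat (2^n * 2^n) 1 (\<lambda>(r,_). if r div 2^n = r mod 2^n
      then complex_of_real (1 / sqrt (2^n)) else 0)"

definition ent_fid :: "nat \<Rightarrow> (complex mat \<Rightarrow> complex mat) \<Rightarrow> complex" where
  "ent_fid n C = (adj (Phi n) * id_tensor (2^n) C (Phi n * adj (Phi n)) * Phi n) $$ (0,0)"

end

theory Submission
  imports Defs "Jordan_Normal_Form.Determinant"
begin

(* Conjugating a non-identity Pauli P by a unitary of the ensemble gives c Q with Q another
  non-identity Pauli and c a phase; c is real because the conjugate is Hermitian, so
  c^2 = 1 and the sandwich by it is just Q rho Q.  The mixing condition then says that the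
  twirl keeps chi_I rho and spreads the remaining weight 1 - chi_I uniformly, 1/(4^n - 1)
  each, over the non-identity Paulis.  Finally the entanglement fidelity of a Pauli channel
  is sum_P chi_P |tr P|^2 / 4^n = chi_I, since only the identity has non-zero trace. *)

lemma mult_add_less_mult: "x < a \<Longrightarrow> y < b \<Longrightarrow> x * b + y < a * (b::nat)"
  by (metis add_less_cancel_left less_le_trans mult_Suc mult_le_mono1 Suc_leI add.commute)

lemma sum_lessThan_mult: "(\<Sum>r<a * b. f r) = (\<Sum>x<a. \<Sum>y<(b::nat). f (x * b + y))"
proof -
  have "(\<Sum>r<a * b. f r) = (\<Sum>x<a. sum f {x * b..<x * b + b})"
    by (rule sum.nat_group[symmetric])
  also have "\<dots> = (\<Sum>x<a. \<Sum>y<b. f (x * b + y))"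
  proof (rule sum.cong[OF refl])
    fix x
    show "sum f {x * b..<x * b + b} = (\<Sum>y<b. f (x * b + y))"
      using sum.shift_bounds_nat_ivl[of f 0 "x * b" b] by (simp add: atLeast0LessThan add.commute)
  qed
  finally show ?thesis .
qed

lemma index_mult_mat_sum:
  assumes "A \<in> carrier_mat a b" "B \<in> carrier_mat b c" "i < a" "j < c"
  shows "(A * B) $$ (i,j) = (\<Sum>k<b. A $$ (i,k) * B $$ (k,j))"
  using assms by (auto simp: scalar_prod_def lessThan_atLeast0 intro!: sum.cong)

lemma mult_single_entry_mult_index:
  assumes A: "A \<in> carrier_mat m d" and B: "B \<in> carrier_mat d k"
    and "a < d" "c < d" "i < m" "j < k"
  shows "(A * mat d d (\<lambda>(x,y). if x = a \<and> y = c then e else 0) * B) $$ (i,j)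
    = A $$ (i,a) * e * B $$ (c,j)"
proof -
  let ?E = "mat d d (\<lambda>(x,y). if x = a \<and> y = c then e else 0)"
  have E: "?E \<in> carrier_mat d d" by simp
  have AE: "(A * ?E) $$ (i,y) = (if y = c then A $$ (i,a) * e else 0)" if "y < d" for y
  proof -
    have "(A * ?E) $$ (i,y) = (\<Sum>x<d. A $$ (i,x) * ?E $$ (x,y))"
      by (rule index_mult_mat_sum[OF A E]) (use assms that in auto)
    also have "\<dots> = (\<Sum>x<d. if x = a then (if y = c then A $$ (i,a) * e else 0) else 0)"
      using that by (intro sum.cong refl) auto
    finally show ?thesis using assms by simp
  qed
  have "(A * ?E * B) $$ (i,j) = (\<Sum>y<d. (A * ?E) $$ (i,y) * B $$ (y,j))"
    by (rule index_mult_mat_sum[OF mult_carrier_mat[OF A E] B]) (use assms in auto)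
  also have "\<dots> = (\<Sum>y<d. if y = c then A $$ (i,a) * e * B $$ (c,j) else 0)"
    by (intro sum.cong refl) (simp add: AE)
  finally show ?thesis using assms by simp
qed

lemma smult_smult_mat: "a \<cdot>\<^sub>m (b \<cdot>\<^sub>m A) = (a * b :: 'a::semigroup_mult) \<cdot>\<^sub>m A"
  by (rule eq_matI) (auto simp: mult.assoc)

lemma one_smult_mat: "(1::'a::monoid_mult) \<cdot>\<^sub>m A = A"
  by (rule eq_matI) auto

lemma adj_dims[simp]: "dim_row (adj A) = dim_col A" "dim_col (adj A) = dim_row A"
  by (simp_all add: adj_def)

lemma adj_index[simp]: "i < dim_col A \<Longrightarrow> j < dim_row A \<Longrightarrow> adj A $$ (i,j) = cnj (A $$ (j,i))"
  by (simp add: adj_def)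

lemma adj_carrier[simp]: "A \<in> carrier_mat a b \<Longrightarrow> adj A \<in> carrier_mat b a"
  by (rule carrier_matI) (auto dest: carrier_matD)

lemma adj_one[simp]: "adj (1\<^sub>m d) = 1\<^sub>m d"
  by (rule eq_matI) auto

lemma adj_smult: "adj (c \<cdot>\<^sub>m A) = cnj c \<cdot>\<^sub>m adj A"
  by (rule eq_matI) auto

lemma adj_mult:
  assumes A: "A \<in> carrier_mat a b" and B: "B \<in> carrier_mat b c"
  shows "adj (A * B) = adj B * adj A"
proof (rule eq_matI)
  fix i j assume "i < dim_row (adj B * adj A)" "j < dim_col (adj B * adj A)"
  then have i: "i < c" and j: "j < a" using A B by auto
  have "adj (A * B) $$ (i,j) = (\<Sum>k<b. cnj (A $$ (j,k)) * cnj (B $$ (k,i)))"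
    using A B i j by (simp add: index_mult_mat_sum[OF A B j i])
  also have "\<dots> = (adj B * adj A) $$ (i,j)"
    using A B i j
    by (simp add: index_mult_mat_sum[OF adj_carrier[OF B] adj_carrier[OF A] i j] mult.commute)
  finally show "adj (A * B) $$ (i,j) = (adj B * adj A) $$ (i,j)" .
qed (use A B in auto)

lemma adj_adj[simp]: "adj (adj A) = A"
  by (rule eq_matI) auto

lemma adj_conj_hermitian:
  assumes U: "U \<in> carrier_mat d d" and P: "P \<in> carrier_mat d d" and "adj P = P"
  shows "adj (adj U * P * U) = adj U * P * U"
proof -
  have "adj (adj U * P * U) = adj U * adj (adj U * P)"
    using U P by (simp add: adj_mult[OF mult_carrier_mat[OF adj_carrier[OF U] P] U])
  also have "\<dots> = adj U * (P * U)"
    using U P \<open>adj P = P\<close> by (simp add: adj_mult[OF adj_carrier[OF U] P])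
  finally show ?thesis using U P by (simp add: assoc_mult_mat[of _ d d _ d _ d])
qed

lemma unitary_adj_mult_self:
  assumes "unitary_mat d U" shows "adj U * U = 1\<^sub>m d"
  using assms mat_mult_left_right_inverse[OF _ adj_carrier] unfolding unitary_mat_def by blast

lemma unitary_conj_eq_smult_one:
  assumes U: "unitary_mat d U" and P: "P \<in> carrier_mat d d"
    and conj: "adj U * P * U = c \<cdot>\<^sub>m 1\<^sub>m d"
  shows "P = c \<cdot>\<^sub>m 1\<^sub>m d"
proof -
  have Uc: "U \<in> carrier_mat d d" and UU: "U * adj U = 1\<^sub>m d"
    using U unfolding unitary_mat_def by auto
  have "P = (U * adj U) * P * (U * adj U)" using P UU by simp
  also have "\<dots> = U * (adj U * P * U) * adj U"
    using Uc P by (simp add: assoc_mult_mat[of _ d d _ d _ d] mult_carrier_mat[of _ d d _ d])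
  also have "\<dots> = c \<cdot>\<^sub>m (U * adj U)"
    using Uc by (simp add: conj mult_smult_distrib[OF Uc one_carrier_mat]
        mult_smult_assoc_mat[OF Uc adj_carrier[OF Uc]])
  finally show ?thesis using UU by simp
qed

lemma quadratic_form_index:
  assumes v: "v \<in> carrier_mat m 1" and Y: "Y \<in> carrier_mat m m"
  shows "(adj v * Y * v) $$ (0,0) = (\<Sum>t<m. v $$ (t,0) * (\<Sum>r<m. cnj (v $$ (r,0)) * Y $$ (r,t)))"
proof -
  have vY: "adj v * Y \<in> carrier_mat 1 m" using mult_carrier_mat[OF adj_carrier[OF v] Y] .
  have "(adj v * Y * v) $$ (0,0) = (\<Sum>t<m. (adj v * Y) $$ (0,t) * v $$ (t,0))"
    by (rule index_mult_mat_sum[OF vY v]) simp_all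
  also have "\<dots> = (\<Sum>t<m. v $$ (t,0) * (\<Sum>r<m. cnj (v $$ (r,0)) * Y $$ (r,t)))"
    using v Y by (intro sum.cong refl)
      (simp add: index_mult_mat_sum[OF adj_carrier[OF v] Y] mult.commute del: index_mult_mat)
  finally show ?thesis .
qed

lemma msum_index[simp]: "i < d \<Longrightarrow> j < d \<Longrightarrow> msum d f S $$ (i,j) = (\<Sum>x\<in>S. f x $$ (i,j))"
  by (simp add: msum_def)

lemma msum_carrier[simp]: "msum d f S \<in> carrier_mat d d"
  by (simp add: msum_def)

lemma msum_dims[simp]: "dim_row (msum d f S) = d" "dim_col (msum d f S) = d"
  by (simp_all add: msum_def)

lemma msum_cong: "(\<And>x. x \<in> S \<Longrightarrow> f x = g x) \<Longrightarrow> msum d f S = msum d g S"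
  by (simp add: msum_def)

lemma msum_mult_left:
  assumes A: "A \<in> carrier_mat d d" and f: "\<And>x. x \<in> S \<Longrightarrow> f x \<in> carrier_mat d d"
  shows "A * msum d f S = msum d (\<lambda>x. A * f x) S"
proof (rule eq_matI)
  fix i j assume "i < dim_row (msum d (\<lambda>x. A * f x) S)" "j < dim_col (msum d (\<lambda>x. A * f x) S)"
  then have i: "i < d" and j: "j < d" by auto
  have "(A * msum d f S) $$ (i,j) = (\<Sum>k<d. A $$ (i,k) * (\<Sum>x\<in>S. f x $$ (k,j)))"
    using i j by (simp add: index_mult_mat_sum[OF A msum_carrier i j])
  also have "\<dots> = (\<Sum>x\<in>S. \<Sum>k<d. A $$ (i,k) * f x $$ (k,j))"
    by (simp add: sum_distrib_left sum.swap[of _ S])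
  also have "\<dots> = (\<Sum>x\<in>S. (A * f x) $$ (i,j))"
    using i j by (intro sum.cong refl) (simp add: index_mult_mat_sum[OF A f])
  finally show "(A * msum d f S) $$ (i,j) = msum d (\<lambda>x. A * f x) S $$ (i,j)" using i j by simp
qed (use A in auto)

lemma msum_mult_right:
  assumes B: "B \<in> carrier_mat d d" and f: "\<And>x. x \<in> S \<Longrightarrow> f x \<in> carrier_mat d d"
  shows "msum d f S * B = msum d (\<lambda>x. f x * B) S"
proof (rule eq_matI)
  fix i j assume "i < dim_row (msum d (\<lambda>x. f x * B) S)" "j < dim_col (msum d (\<lambda>x. f x * B) S)"
  then have i: "i < d" and j: "j < d" by auto
  have "(msum d f S * B) $$ (i,j) = (\<Sum>k<d. (\<Sum>x\<in>S. f x $$ (i,k)) * B $$ (k,j))"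
    using i j by (simp add: index_mult_mat_sum[OF msum_carrier B i j])
  also have "\<dots> = (\<Sum>x\<in>S. \<Sum>k<d. f x $$ (i,k) * B $$ (k,j))"
    by (simp add: sum_distrib_right sum.swap[of _ S])
  also have "\<dots> = (\<Sum>x\<in>S. (f x * B) $$ (i,j))"
    using i j by (intro sum.cong refl) (simp add: index_mult_mat_sum[OF f B])
  finally show "(msum d f S * B) $$ (i,j) = msum d (\<lambda>x. f x * B) S $$ (i,j)" using i j by simp
qed (use B in auto)

definition trace :: "'a::comm_monoid_add mat \<Rightarrow> 'a" where
  "trace A = (\<Sum>i<dim_row A. A $$ (i,i))"

lemma trace_one_mat: "trace (1\<^sub>m n) = of_nat n"
  by (simp add: trace_def)

lemma kron_dims[simp]:
  "dim_row (kron A B) = dim_row A * dim_row B" "dim_col (kron A B) = dim_col A * dim_col B"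
  by (simp_all add: kron_def)

lemma kron_index[simp]:
  "i < dim_row A * dim_row B \<Longrightarrow> j < dim_col A * dim_col B \<Longrightarrow>
   kron A B $$ (i,j)
     = A $$ (i div dim_row B, j div dim_col B) * B $$ (i mod dim_row B, j mod dim_col B)"
  by (simp add: kron_def)

lemma kron_index_block:
  assumes "A \<in> carrier_mat a a'" "B \<in> carrier_mat b b'" "x < a" "y < a'" "u < b" "v < b'"
  shows "kron A B $$ (x * b + u, y * b' + v) = A $$ (x,y) * B $$ (u,v)"
  using assms mult_add_less_mult[of x a u b] mult_add_less_mult[of y a' v b'] by auto

lemma adj_kron: "adj (kron A B) = kron (adj A) (adj B)"
proof (rule eq_matI)
  fix i j assume "i < dim_row (kron (adj A) (adj B))" "j < dim_col (kron (adj A) (adj B))"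
  then have i: "i < dim_col A * dim_col B" and j: "j < dim_row A * dim_row B" by auto
  then have "dim_col B > 0" "dim_row B > 0" by (auto intro: gr0I)
  with i j show "adj (kron A B) $$ (i, j) = kron (adj A) (adj B) $$ (i, j)"
    by (simp add: less_mult_imp_div_less)
qed simp_all

lemma kron_one: "kron (1\<^sub>m a) (1\<^sub>m b) = 1\<^sub>m (a * b)"
proof (rule eq_matI)
  fix i j assume "i < dim_row (1\<^sub>m (a * b))" "j < dim_col (1\<^sub>m (a * b))"
  then have i: "i < a * b" and j: "j < a * b" by auto
  then have "b > 0" by (auto intro: gr0I)
  then show "kron (1\<^sub>m a) (1\<^sub>m b) $$ (i, j) = 1\<^sub>m (a * b) $$ (i, j)"
    using i j by (simp add: less_mult_imp_div_less) (metis div_mult_mod_eq)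
qed simp_all

lemma trace_kron:
  assumes A: "A \<in> carrier_mat a a" and B: "B \<in> carrier_mat b b"
  shows "trace (kron A B) = trace A * trace B"
proof -
  have entry: "kron A B $$ (x * b + y, x * b + y) = A $$ (x,x) * B $$ (y,y)"
    if "x < a" "y < b" for x y
    using kron_index_block[OF A B that(1) that(1) that(2) that(2)] .
  have "trace (kron A B) = (\<Sum>x<a. \<Sum>y<b. kron A B $$ (x * b + y, x * b + y))"
    using A B by (simp add: trace_def sum_lessThan_mult del: kron_index)
  also have "\<dots> = (\<Sum>x<a. \<Sum>y<b. A $$ (x,x) * B $$ (y,y))"
    by (simp add: entry)
  also have "\<dots> = trace A * trace B"
    using A B by (simp add: trace_def sum_product)
  finally show ?thesis .
qed

lemma kron_eq_smult_kron_index: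
  assumes A: "A \<in> carrier_mat a a'" "A' \<in> carrier_mat a a'"
    and B: "B \<in> carrier_mat b b'" "B' \<in> carrier_mat b b'"
    and eq: "kron A B = c \<cdot>\<^sub>m kron A' B'"
    and "x < a" "y < a'" "u < b" "v < b'"
  shows "A $$ (x,y) * B $$ (u,v) = c * (A' $$ (x,y) * B' $$ (u,v))"
proof -
  have "A $$ (x,y) * B $$ (u,v) = kron A B $$ (x * b + u, y * b' + v)"
    using kron_index_block[OF A(1) B(1)] assms by simp
  also have "\<dots> = (c \<cdot>\<^sub>m kron A' B') $$ (x * b + u, y * b' + v)"
    by (simp add: eq)
  also have "\<dots> = c * (A' $$ (x,y) * B' $$ (u,v))"
    using kron_index_block[OF A(2) B(2)] assms carrier_matD[OF A(2)] carrier_matD[OF B(2)]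
      mult_add_less_mult[of x a u b] mult_add_less_mult[of y a' v b'] by simp
  finally show ?thesis .
qed

lemma kron_eq_smult_kron_left:
  assumes A: "A \<in> carrier_mat a a'" "A' \<in> carrier_mat a a'"
    and B: "B \<in> carrier_mat b b'" "B' \<in> carrier_mat b b'"
    and eq: "kron A B = c \<cdot>\<^sub>m kron A' B'" and uv: "u < b" "v < b'" and nz: "B $$ (u,v) \<noteq> 0"
  shows "A = (c * B' $$ (u,v) / B $$ (u,v)) \<cdot>\<^sub>m A'"
proof (rule eq_matI)
  fix x y assume "x < dim_row ((c * B' $$ (u,v) / B $$ (u,v)) \<cdot>\<^sub>m A')"
    "y < dim_col ((c * B' $$ (u,v) / B $$ (u,v)) \<cdot>\<^sub>m A')"
  then have xy: "x < a" "y < a'" using A by auto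
  have "A $$ (x,y) * B $$ (u,v) = c * (A' $$ (x,y) * B' $$ (u,v))"
    by (rule kron_eq_smult_kron_index[OF A B eq xy uv])
  then show "A $$ (x,y) = ((c * B' $$ (u,v) / B $$ (u,v)) \<cdot>\<^sub>m A') $$ (x,y)"
    using A xy nz by (simp add: field_simps)
qed (use A in auto)

lemma kron_eq_smult_kron_right:
  assumes A: "A \<in> carrier_mat a a'" "A' \<in> carrier_mat a a'"
    and B: "B \<in> carrier_mat b b'" "B' \<in> carrier_mat b b'"
    and eq: "kron A B = c \<cdot>\<^sub>m kron A' B'" and xy: "x < a" "y < a'" and nz: "A $$ (x,y) \<noteq> 0"
  shows "B = (c * A' $$ (x,y) / A $$ (x,y)) \<cdot>\<^sub>m B'"
proof (rule eq_matI)
  fix u v assume "u < dim_row ((c * A' $$ (x,y) / A $$ (x,y)) \<cdot>\<^sub>m B')"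
    "v < dim_col ((c * A' $$ (x,y) / A $$ (x,y)) \<cdot>\<^sub>m B')"
  then have uv: "u < b" "v < b'" using B by auto
  have "A $$ (x,y) * B $$ (u,v) = c * (A' $$ (x,y) * B' $$ (u,v))"
    by (rule kron_eq_smult_kron_index[OF A B eq xy uv])
  then show "B $$ (u,v) = ((c * A' $$ (x,y) / A $$ (x,y)) \<cdot>\<^sub>m B') $$ (u,v)"
    using B uv nz by (simp add: field_simps)
qed (use B in auto)

section \<open>Pauli strings\<close>

lemma mat_of_rows_list_2_index:
  "mat_of_rows_list 2 [[a, b], [c, d]] $$ (0,0) = a"
  "mat_of_rows_list 2 [[a, b], [c, d]] $$ (0, Suc 0) = b"
  "mat_of_rows_list 2 [[a, b], [c, d]] $$ (Suc 0, 0) = c"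
  "mat_of_rows_list 2 [[a, b], [c, d]] $$ (Suc 0, Suc 0) = d"
  by (auto simp: mat_of_rows_list_def)

lemma mat_of_rows_list_2_carrier: "mat_of_rows_list 2 [[a, b], [c, d]] \<in> carrier_mat 2 2"
  unfolding mat_of_rows_list_def
  by (simp only: mat_carrier length_Cons list.size numeral_2_eq_2 add_0 add_Suc_right)

lemma pauli1_carrier[simp]: "pauli1 k \<in> carrier_mat 2 2"
  unfolding pauli1_def by (simp only: mat_of_rows_list_2_carrier if_cancel simp_thms split: if_split)

lemma pauli1_dims[simp]: "dim_row (pauli1 k) = 2" "dim_col (pauli1 k) = 2"
  using carrier_matD[OF pauli1_carrier[of k]] by auto

lemma pauli1_index:
  assumes "i < 2" "j < 2"
  shows "pauli1 k $$ (i,j) =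
    (if k = 0 then (if i = j then 1 else 0)
     else if k = 1 then (if i = j then 0 else 1)
     else if k = 2 then (if i = j then 0 else if i = 0 then -\<i> else \<i>)
     else (if i \<noteq> j then 0 else if i = 0 then 1 else -1))"
  using assms unfolding pauli1_def less_2_cases_iff
  by (elim disjE) (simp_all add: mat_of_rows_list_2_index)

lemma pauli1_0: "pauli1 0 = 1\<^sub>m 2"
  by (rule eq_matI) (simp_all add: pauli1_index)

lemma adj_pauli1: "adj (pauli1 k) = pauli1 k"
  by (rule eq_matI) (auto simp: pauli1_index)

lemma trace_pauli1: "trace (pauli1 k) = (if k = 0 then 2 else 0)"
  by (simp add: trace_def pauli1_index numeral_2_eq_2)

lemma pauli1_nonzero: "pauli1 k $$ (0, if k = 1 \<or> k = 2 then 1 else 0) \<noteq> 0"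
  by (simp add: pauli1_index)

lemma pauli1_eq_smult:
  assumes "k \<in> {0,1,2,3}" "k' \<in> {0,1,2,3}" and eq: "pauli1 k = \<mu> \<cdot>\<^sub>m pauli1 k'"
  shows "k = k'"
proof -
  have e: "pauli1 k $$ (i,j) = \<mu> * pauli1 k' $$ (i,j)" if "i < 2" "j < 2" for i j
    using that by (simp add: eq)
  show ?thesis
    using assms(1,2) e[of 0 0] e[of 0 1] e[of 1 0] e[of 1 1]
    by (auto simp: pauli1_index)
qed

lemma pauli_string_Nil: "pauli_string [] = 1\<^sub>m 1"
  by (simp add: pauli_string_def)

lemma pauli_string_Cons: "pauli_string (k # l) = kron (pauli1 k) (pauli_string l)"
  by (simp add: pauli_string_def)

lemma pauli_string_carrier: "pauli_string l \<in> carrier_mat (2 ^ length l) (2 ^ length l)"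
  by (induction l) (auto simp: pauli_string_Nil pauli_string_Cons intro: carrier_matI)

lemma pauli_string_dims[simp]:
  "dim_row (pauli_string l) = 2 ^ length l" "dim_col (pauli_string l) = 2 ^ length l"
  using carrier_matD[OF pauli_string_carrier[of l]] by auto

lemma adj_pauli_string: "adj (pauli_string l) = pauli_string l"
  by (induction l) (simp_all add: pauli_string_Nil pauli_string_Cons adj_kron adj_pauli1)

lemma pauli_string_replicate_0: "pauli_string (replicate m 0) = 1\<^sub>m (2 ^ m)"
  by (induction m) (simp_all add: pauli_string_Nil pauli_string_Cons pauli1_0 kron_one)

lemma trace_pauli_string: "trace (pauli_string l) = (if set l \<subseteq> {0} then 2 ^ length l else 0)"
  by (induction l)
    (simp_all add: pauli_string_Nil pauli_string_Cons trace_pauli1 trace_one_mat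
      trace_kron[OF pauli1_carrier pauli_string_carrier])

lemma pauli_string_nonzero: "\<exists>i j. i < 2 ^ length l \<and> j < 2 ^ length l \<and> pauli_string l $$ (i,j) \<noteq> 0"
proof (induction l)
  case Nil
  show ?case by (simp add: pauli_string_Nil)
next
  case (Cons k l)
  then obtain u v where uv: "u < 2 ^ length l" "v < 2 ^ length l" "pauli_string l $$ (u,v) \<noteq> 0"
    by blast
  define y :: nat where "y = (if k = 1 \<or> k = 2 then 1 else 0)"
  have y: "y < 2" by (simp add: y_def)
  have "pauli_string (k # l) $$ (0 * 2 ^ length l + u, y * 2 ^ length l + v)
      = pauli1 k $$ (0, y) * pauli_string l $$ (u, v)"
    unfolding pauli_string_Cons
    by (rule kron_index_block[OF pauli1_carrier pauli_string_carrier]) (use y uv in auto)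
  moreover have "pauli1 k $$ (0, y) \<noteq> 0"
    using pauli1_nonzero[of k] unfolding y_def .
  ultimately have "pauli_string (k # l) $$ (u, y * 2 ^ length l + v) \<noteq> 0"
    using uv(3) by simp
  moreover have "y * 2 ^ length l + v < 2 ^ length (k # l)"
    using mult_add_less_mult[OF y uv(2)] by simp
  ultimately show ?case using uv(1) by (intro exI[of _ u] exI) auto
qed

lemma pauli_string_eq_smult:
  assumes "set l \<subseteq> {0,1,2,3}" "set l' \<subseteq> {0,1,2,3}" "length l = length l'"
    and "pauli_string l = c \<cdot>\<^sub>m pauli_string l'"
  shows "l = l'"
  using assms
proof (induction l arbitrary: l' c)
  case Nil
  then show ?case by simp
next
  case (Cons k l)
  then obtain k' l2 where l': "l' = k' # l2" and len: "length l2 = length l"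
    by (cases l') auto
  have kk': "k \<in> {0,1,2,3}" "k' \<in> {0,1,2,3}" and sets: "set l \<subseteq> {0,1,2,3}" "set l2 \<subseteq> {0,1,2,3}"
    using Cons.prems l' by auto
  note carriers = pauli1_carrier[of k] pauli1_carrier[of k']
    pauli_string_carrier[of l] pauli_string_carrier[of l2, unfolded len]
  have eq: "kron (pauli1 k) (pauli_string l) = c \<cdot>\<^sub>m kron (pauli1 k') (pauli_string l2)"
    using Cons.prems(4) by (simp add: l' pauli_string_Cons)
  obtain u v where uv: "u < 2 ^ length l" "v < 2 ^ length l" "pauli_string l $$ (u,v) \<noteq> 0"
    using pauli_string_nonzero by blast
  have "k = k'"
    using kron_eq_smult_kron_left[OF carriers eq uv] by (rule pauli1_eq_smult[OF kk'])
  obtain \<nu> where "pauli_string l = \<nu> \<cdot>\<^sub>m pauli_string l2"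
    using kron_eq_smult_kron_right[OF carriers eq _ _ pauli1_nonzero[of k]] by auto
  then have "l = l2"
    using Cons.IH[OF sets len[symmetric]] by blast
  with \<open>k = k'\<close> show ?case by (simp add: l')
qed

lemma finite_Qn: "finite (Qn n)"
proof -
  have "Qn n = pauli_string ` {l. set l \<subseteq> {0,1,2,3} \<and> length l = n}"
    unfolding Qn_def by auto
  moreover have "finite {l. set l \<subseteq> {0::nat,1,2,3} \<and> length l = n}"
    by (rule finite_lists_length_eq) simp
  ultimately show ?thesis by simp
qed

lemma Qn_carrier: "P \<in> Qn n \<Longrightarrow> P \<in> carrier_mat (2 ^ n) (2 ^ n)"
  unfolding Qn_def using pauli_string_carrier by auto

lemma adj_Qn: "P \<in> Qn n \<Longrightarrow> adj P = P"
  unfolding Qn_def using adj_pauli_string by auto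

lemma one_in_Qn: "1\<^sub>m (2 ^ n) \<in> Qn n"
  unfolding Qn_def using pauli_string_replicate_0[of n]
  by (intro CollectI exI[of _ "replicate n 0"]) auto

lemma Qn_nonzero: "P \<in> Qn n \<Longrightarrow> \<exists>i j. i < 2 ^ n \<and> j < 2 ^ n \<and> P $$ (i,j) \<noteq> 0"
  unfolding Qn_def using pauli_string_nonzero by auto

lemma Qn_eq_smult:
  assumes "P \<in> Qn n" "Q \<in> Qn n" and eq: "P = c \<cdot>\<^sub>m Q"
  shows "P = Q"
proof -
  obtain l l' where l: "P = pauli_string l" "length l = n" "set l \<subseteq> {0,1,2,3}"
    and l': "Q = pauli_string l'" "length l' = n" "set l' \<subseteq> {0,1,2,3}"
    using assms(1,2) unfolding Qn_def by blast
  have "l = l'"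
    using l l' eq by (intro pauli_string_eq_smult[of l l' c]) simp_all
  then show ?thesis using l l' by simp
qed

lemma trace_Qn:
  assumes "P \<in> Qn n"
  shows "trace P = (if P = 1\<^sub>m (2 ^ n) then 2 ^ n else 0)"
proof -
  obtain l where l: "P = pauli_string l" "length l = n"
    using assms unfolding Qn_def by blast
  show ?thesis
  proof (cases "set l \<subseteq> {0}")
    case True
    then have "l = replicate n 0" using l(2) by (auto intro: replicate_eqI)
    then show ?thesis using l(1) by (simp add: pauli_string_replicate_0 trace_one_mat)
  next
    case False
    then have "trace P = 0" using l by (simp add: trace_pauli_string)
    moreover have "trace (1\<^sub>m (2 ^ n) :: complex mat) \<noteq> 0" by (simp add: trace_one_mat)
    ultimately show ?thesis by auto
  qed
qed

lemma pi_phase_smult: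
  assumes "c \<in> phases" "Q \<in> Qn n"
  shows "pi_phase n (c \<cdot>\<^sub>m Q) = Q"
  unfolding pi_phase_def
proof (rule the_equality)
  show "Q \<in> Qn n \<and> (\<exists>c'\<in>phases. c \<cdot>\<^sub>m Q = c' \<cdot>\<^sub>m Q)" using assms by blast
next
  fix Q' assume "Q' \<in> Qn n \<and> (\<exists>c'\<in>phases. c \<cdot>\<^sub>m Q = c' \<cdot>\<^sub>m Q')"
  then obtain c' where Q': "Q' \<in> Qn n" "c' \<in> phases" "c \<cdot>\<^sub>m Q = c' \<cdot>\<^sub>m Q'" by blast
  have "c' \<noteq> 0" using Q'(2) unfolding phases_def by auto
  then have "Q' = (1 / c') \<cdot>\<^sub>m (c' \<cdot>\<^sub>m Q')"
    by (simp add: smult_smult_mat one_smult_mat)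
  also have "\<dots> = (c / c') \<cdot>\<^sub>m Q"
    by (simp add: smult_smult_mat flip: Q'(3))
  finally show "Q' = Q" using Qn_eq_smult[OF Q'(1) assms(2)] by blast
qed

lemma conj_Qn_star:
  assumes U: "unitary_mat (2 ^ n) U" and normal: "\<forall>P\<in>Pn n. adj U * P * U \<in> Pn n"
    and P: "P \<in> Qn_star n"
  obtains c Q where "c \<in> phases" "c * c = 1" "Q \<in> Qn_star n" "adj U * P * U = c \<cdot>\<^sub>m Q"
proof -
  have PQ: "P \<in> Qn n" "P \<noteq> 1\<^sub>m (2 ^ n)" using P unfolding Qn_star_def by auto
  have Pc: "P \<in> carrier_mat (2 ^ n) (2 ^ n)" by (rule Qn_carrier[OF PQ(1)])
  have Uc: "U \<in> carrier_mat (2 ^ n) (2 ^ n)" using U unfolding unitary_mat_def by auto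
  have "P \<in> Pn n" unfolding Pn_def phases_def using PQ(1) one_smult_mat[of P] by force
  then obtain c Q where c: "c \<in> phases" and Q: "Q \<in> Qn n" and V: "adj U * P * U = c \<cdot>\<^sub>m Q"
    using normal unfolding Pn_def by blast
  have "cnj c \<cdot>\<^sub>m Q = c \<cdot>\<^sub>m Q"
    using adj_conj_hermitian[OF Uc Pc adj_Qn[OF PQ(1)]] by (simp add: V adj_smult adj_Qn[OF Q])
  moreover obtain i j where "i < 2 ^ n" "j < 2 ^ n" "Q $$ (i,j) \<noteq> 0"
    using Qn_nonzero[OF Q] by blast
  ultimately have "cnj c = c"
    using Qn_carrier[OF Q] by (metis carrier_matD index_smult_mat(1) mult_cancel_right)
  then have "c * c = 1" using c unfolding phases_def by (auto simp: complex_eq_iff)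
  moreover have "Q \<noteq> 1\<^sub>m (2 ^ n)"
  proof
    assume "Q = 1\<^sub>m (2 ^ n)"
    then have "P = c \<cdot>\<^sub>m 1\<^sub>m (2 ^ n)" using unitary_conj_eq_smult_one[OF U Pc] V by simp
    then show False using Qn_eq_smult[OF PQ(1) one_in_Qn] PQ(2) by blast
  qed
  ultimately show ?thesis using that c Q V unfolding Qn_star_def by blast
qed

lemma conj_Qn_star_sandwich:
  assumes U: "unitary_mat (2 ^ n) U" and normal: "\<forall>P\<in>Pn n. adj U * P * U \<in> Pn n"
    and P: "P \<in> Qn_star n" and \<rho>: "\<rho> \<in> carrier_mat (2 ^ n) (2 ^ n)"
  shows "pi_phase n (adj U * P * U) \<in> Qn_star n \<and>
    (adj U * P * U) * \<rho> * (adj U * P * U)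
      = pi_phase n (adj U * P * U) * \<rho> * pi_phase n (adj U * P * U)"
proof -
  obtain c Q where c: "c \<in> phases" "c * c = 1" and Q: "Q \<in> Qn_star n"
    and V: "adj U * P * U = c \<cdot>\<^sub>m Q"
    using conj_Qn_star[OF U normal P] .
  have Qc: "Q \<in> carrier_mat (2 ^ n) (2 ^ n)" using Q Qn_carrier unfolding Qn_star_def by blast
  have "pi_phase n (adj U * P * U) = Q"
    using pi_phase_smult[OF c(1)] Q unfolding V Qn_star_def by blast
  moreover have "(c \<cdot>\<^sub>m Q) * \<rho> * (c \<cdot>\<^sub>m Q) = (c * c) \<cdot>\<^sub>m (Q * \<rho> * Q)"
    using Qc \<rho>
    by (simp add: mult_smult_assoc_mat[of _ "2 ^ n" "2 ^ n" _ "2 ^ n"] smult_smult_mat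
        mult_smult_distrib[of _ "2 ^ n" "2 ^ n" _ "2 ^ n"]
        mult_carrier_mat[of _ "2 ^ n" "2 ^ n" _ "2 ^ n"])
  ultimately show ?thesis using Q c(2) by (simp add: V one_smult_mat)
qed

section \<open>Entanglement fidelity of a Pauli channel\<close>

lemma Phi_carrier: "Phi n \<in> carrier_mat (2 ^ n * 2 ^ n) 1"
  by (simp add: Phi_def)

lemma Phi_index_block:
  assumes "x < 2 ^ n" "y < 2 ^ n"
  shows "Phi n $$ (x * 2 ^ n + y, 0) = (if x = y then complex_of_real (1 / sqrt (2 ^ n)) else 0)"
  using assms mult_add_less_mult[OF assms] by (simp add: Phi_def)

lemma cnj_Phi_index: "r < 2 ^ n * 2 ^ n \<Longrightarrow> cnj (Phi n $$ (r,0)) = Phi n $$ (r,0)"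
  by (simp add: Phi_def)

lemma sum_Phi:
  "(\<Sum>r<2 ^ n * 2 ^ n. Phi n $$ (r,0) * f r)
    = complex_of_real (1 / sqrt (2 ^ n)) * (\<Sum>x<2 ^ n. f (x * 2 ^ n + x))"
proof -
  have "(\<Sum>r<2 ^ n * 2 ^ n. Phi n $$ (r,0) * f r)
      = (\<Sum>x<2 ^ n. \<Sum>y<2 ^ n. Phi n $$ (x * 2 ^ n + y, 0) * f (x * 2 ^ n + y))"
    by (rule sum_lessThan_mult)
  also have "\<dots> = (\<Sum>x<2 ^ n. \<Sum>y<2 ^ n.
      if x = y then complex_of_real (1 / sqrt (2 ^ n)) * f (x * 2 ^ n + y) else 0)"
    by (intro sum.cong refl) (simp add: Phi_index_block)
  finally show ?thesis by (simp add: sum_distrib_left)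
qed

lemma Phi_outer_block:
  assumes ac: "a < 2 ^ n" "c < 2 ^ n"
  shows "mat (2 ^ n) (2 ^ n) (\<lambda>(x,y). (Phi n * adj (Phi n)) $$ (a * 2 ^ n + x, c * 2 ^ n + y))
    = mat (2 ^ n) (2 ^ n) (\<lambda>(x,y). if x = a \<and> y = c then 1 / 2 ^ n else 0)"
    (is "?B = ?E")
proof (rule eq_matI)
  fix x y assume "x < dim_row ?E" "y < dim_col ?E"
  then have xy: "x < 2 ^ n" "y < 2 ^ n" by auto
  have "(Phi n * adj (Phi n)) $$ (a * 2 ^ n + x, c * 2 ^ n + y)
      = Phi n $$ (a * 2 ^ n + x, 0) * cnj (Phi n $$ (c * 2 ^ n + y, 0))"
    using ac xy mult_add_less_mult[of a "2 ^ n" x "2 ^ n"] mult_add_less_mult[of c "2 ^ n" y "2 ^ n"]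
      carrier_matD[OF Phi_carrier]
    by (simp add: index_mult_mat_sum[OF Phi_carrier adj_carrier[OF Phi_carrier]]
        del: index_mult_mat)
  also have "\<dots> = (if x = a \<and> y = c then 1 / 2 ^ n else 0)"
    using ac xy by (simp add: Phi_index_block flip: of_real_mult)
  finally show "?B $$ (x,y) = ?E $$ (x,y)"
    using xy by simp
qed simp_all

lemma ent_fid_eq_sum:
  "ent_fid n C = 1 / 2 ^ n * (\<Sum>a<2 ^ n. \<Sum>c<2 ^ n.
     C (mat (2 ^ n) (2 ^ n) (\<lambda>(x,y). if x = a \<and> y = c then 1 / 2 ^ n else 0)) $$ (a,c))"
proof -
  define d :: nat where "d = 2 ^ n"
  define s where "s = complex_of_real (1 / sqrt (2 ^ n))"
  define E where "E a c = mat d d (\<lambda>(x,y). if x = a \<and> y = c then 1 / 2 ^ n else (0::complex))" for a c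
  define Y where "Y = id_tensor d C (Phi n * adj (Phi n))"
  have Phi: "Phi n \<in> carrier_mat (d * d) 1" using Phi_carrier unfolding d_def .
  have Y: "Y \<in> carrier_mat (d * d) (d * d)" by (simp add: Y_def id_tensor_def)
  have Y_diag: "Y $$ (a * d + a, c * d + c) = C (E a c) $$ (a,c)" if "a < d" "c < d" for a c
    using that mult_add_less_mult[of a d a d] mult_add_less_mult[of c d c d]
    by (simp add: Y_def id_tensor_def E_def Phi_outer_block[OF that[unfolded d_def], folded d_def])
  have "ent_fid n C = (\<Sum>t<d * d. Phi n $$ (t,0) * (\<Sum>r<d * d. Phi n $$ (r,0) * Y $$ (r,t)))"
    unfolding ent_fid_def Y_def[symmetric] d_def[symmetric]
    by (simp add: quadratic_form_index[OF Phi Y] cnj_Phi_index[of _ n, folded d_def])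
  also have "\<dots> = s * (\<Sum>c<d. s * (\<Sum>a<d. Y $$ (a * d + a, c * d + c)))"
    unfolding d_def s_def by (simp only: sum_Phi)
  also have "\<dots> = s * s * (\<Sum>c<d. \<Sum>a<d. C (E a c) $$ (a,c))"
    by (simp add: sum_distrib_left mult.assoc Y_diag)
  also have "\<dots> = 1 / 2 ^ n * (\<Sum>a<d. \<Sum>c<d. C (E a c) $$ (a,c))"
    by (subst sum.swap) (simp add: s_def flip: of_real_mult)
  finally show ?thesis unfolding E_def d_def .
qed

lemma ent_fid_pauli_channel: "ent_fid n (pauli_channel n chi) = complex_of_real (chi (1\<^sub>m (2 ^ n)))"
proof -
  define d :: nat where "d = 2 ^ n"
  have entry: "pauli_channel n chi (mat d d (\<lambda>(x,y). if x = a \<and> y = c then 1 / 2 ^ n else 0)) $$ (a,c)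
      = (\<Sum>P\<in>Qn n. complex_of_real (chi P) * (P $$ (a,a) * (1 / 2 ^ n) * P $$ (c,c)))"
    if "a < d" "c < d" for a c
  proof -
    let ?E = "mat d d (\<lambda>(x,y). if x = a \<and> y = c then 1 / 2 ^ n else 0)"
    have "(complex_of_real (chi P) \<cdot>\<^sub>m (P * ?E * P)) $$ (a,c)
        = complex_of_real (chi P) * (P $$ (a,a) * (1 / 2 ^ n) * P $$ (c,c))" if "P \<in> Qn n" for P
    proof -
      have P: "P \<in> carrier_mat d d" using Qn_carrier[OF that] unfolding d_def .
      have "(P * ?E * P) $$ (a,c) = P $$ (a,a) * (1 / 2 ^ n) * P $$ (c,c)"
        by (rule mult_single_entry_mult_index[OF P P]) (use \<open>a < d\<close> \<open>c < d\<close> in auto)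
      then show ?thesis using carrier_matD[OF P] \<open>a < d\<close> \<open>c < d\<close> by simp
    qed
    then show ?thesis
      using that by (simp add: pauli_channel_def d_def[symmetric])
  qed
  have "ent_fid n (pauli_channel n chi) = 1 / 2 ^ n * (\<Sum>a<d. \<Sum>c<d. \<Sum>P\<in>Qn n.
      complex_of_real (chi P) * (P $$ (a,a) * (1 / 2 ^ n) * P $$ (c,c)))"
    unfolding ent_fid_eq_sum d_def[symmetric] by (simp add: entry)
  also have "\<dots> = (\<Sum>P\<in>Qn n. complex_of_real (chi P) / 2 ^ n / 2 ^ n *
      ((\<Sum>a<d. P $$ (a,a)) * (\<Sum>c<d. P $$ (c,c))))"
    by (simp add: sum_product sum_distrib_left sum_divide_distrib sum.swap[where B = "Qn n"]
        ac_simps)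
  also have "\<dots> = (\<Sum>P\<in>Qn n. complex_of_real (chi P) / 2 ^ n / 2 ^ n * (trace P * trace P))"
    by (intro sum.cong refl) (simp add: trace_def d_def carrier_matD[OF Qn_carrier])
  also have "\<dots> = (\<Sum>P\<in>Qn n. if P = 1\<^sub>m (2 ^ n) then complex_of_real (chi P) else 0)"
    by (intro sum.cong refl) (simp add: trace_Qn)
  also have "\<dots> = complex_of_real (chi (1\<^sub>m (2 ^ n)))"
    using one_in_Qn finite_Qn by simp
  finally show ?thesis .
qed

section \<open>Twirling a Pauli channel\<close>

lemma pauli_channel_conj:
  assumes U: "U \<in> carrier_mat (2 ^ n) (2 ^ n)" and \<rho>: "\<rho> \<in> carrier_mat (2 ^ n) (2 ^ n)"
  shows "adj U * pauli_channel n chi (U * \<rho> * adj U) * U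
    = msum (2 ^ n) (\<lambda>P. complex_of_real (chi P) \<cdot>\<^sub>m ((adj U * P * U) * \<rho> * (adj U * P * U))) (Qn n)"
proof -
  let ?d = "2 ^ n :: nat"
  let ?X = "U * \<rho> * adj U"
  let ?f = "\<lambda>P. complex_of_real (chi P) \<cdot>\<^sub>m (P * ?X * P)"
  have f: "?f P \<in> carrier_mat ?d ?d" and adj_f: "adj U * ?f P \<in> carrier_mat ?d ?d"
    if "P \<in> Qn n" for P
    using Qn_carrier[OF that] U \<rho> by (simp_all add: mult_carrier_mat[of _ ?d ?d _ ?d])
  have "adj U * pauli_channel n chi ?X * U = msum ?d (\<lambda>P. adj U * ?f P * U) (Qn n)"
    unfolding pauli_channel_def
    by (simp add: msum_mult_left[OF adj_carrier[OF U] f] msum_mult_right[OF U adj_f])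
  also have "\<dots> = msum ?d
      (\<lambda>P. complex_of_real (chi P) \<cdot>\<^sub>m ((adj U * P * U) * \<rho> * (adj U * P * U))) (Qn n)"
  proof (rule msum_cong)
    fix P assume "P \<in> Qn n"
    with U \<rho> show "adj U * ?f P * U
        = complex_of_real (chi P) \<cdot>\<^sub>m ((adj U * P * U) * \<rho> * (adj U * P * U))"
      using Qn_carrier
      by (simp add: mult_smult_distrib[of _ ?d ?d _ ?d] mult_smult_assoc_mat[of _ ?d ?d _ ?d]
          assoc_mult_mat[of _ ?d ?d _ ?d _ ?d] mult_carrier_mat[of _ ?d ?d _ ?d])
  qed
  finally show ?thesis .
qed

lemma twirl_pauli_channel_index:
  assumes U: "\<And>i. i < K \<Longrightarrow> U i \<in> carrier_mat (2 ^ n) (2 ^ n)"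
    and \<rho>: "\<rho> \<in> carrier_mat (2 ^ n) (2 ^ n)" and ab: "a < 2 ^ n" "b < 2 ^ n"
  shows "twirl n K p U (pauli_channel n chi) \<rho> $$ (a,b) = (\<Sum>P\<in>Qn n. complex_of_real (chi P) *
    (\<Sum>i<K. complex_of_real (p i) * ((adj (U i) * P * U i) * \<rho> * (adj (U i) * P * U i)) $$ (a,b)))"
proof -
  have "twirl n K p U (pauli_channel n chi) \<rho> $$ (a,b) = (\<Sum>i<K. complex_of_real (p i) *
      (adj (U i) * pauli_channel n chi (U i * \<rho> * adj (U i)) * U i) $$ (a,b))"
    using ab carrier_matD[OF U] by (simp add: twirl_def)
  also have "\<dots> = (\<Sum>i<K. \<Sum>P\<in>Qn n. complex_of_real (p i) *
      (complex_of_real (chi P) * ((adj (U i) * P * U i) * \<rho> * (adj (U i) * P * U i)) $$ (a,b)))"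
    using ab carrier_matD[OF U]
    by (intro sum.cong refl) (simp add: pauli_channel_conj[OF U \<rho>] sum_distrib_left)
  finally show ?thesis
    by (simp add: sum.swap[where B = "Qn n"] sum_distrib_left ac_simps)
qed

lemma pauli_mixing_average:
  assumes mixing: "pauli_mixing n K p U" and P: "P \<in> Qn_star n"
    and \<rho>: "\<rho> \<in> carrier_mat (2 ^ n) (2 ^ n)"
  shows "(\<Sum>i<K. complex_of_real (p i) * ((adj (U i) * P * U i) * \<rho> * (adj (U i) * P * U i)) $$ (a,b))
    = 1 / (4 ^ n - 1) * (\<Sum>Q\<in>Qn_star n. (Q * \<rho> * Q) $$ (a,b))"
proof -
  define V where "V i = adj (U i) * P * U i" for i
  define g where "g i = pi_phase n (V i)" for i
  have g: "g i \<in> Qn_star n \<and> V i * \<rho> * V i = g i * \<rho> * g i" if "i < K" for i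
  proof -
    have "unitary_mat (2 ^ n) (U i)" "\<forall>P\<in>Pn n. adj (U i) * P * U i \<in> Pn n"
      using mixing that unfolding pauli_mixing_def by auto
    from conj_Qn_star_sandwich[OF this P \<rho>] show ?thesis unfolding g_def V_def .
  qed
  have weight: "(\<Sum>i | i < K \<and> g i = Q. p i) = 1 / (4 ^ n - 1)" if "Q \<in> Qn_star n" for Q
    using mixing P that unfolding pauli_mixing_def g_def V_def by blast
  have "(\<Sum>i<K. complex_of_real (p i) * (V i * \<rho> * V i) $$ (a,b))
      = (\<Sum>i<K. complex_of_real (p i) * (g i * \<rho> * g i) $$ (a,b))"
    using g by simp
  also have "\<dots> = (\<Sum>Q\<in>Qn_star n. \<Sum>i | i \<in> {..<K} \<and> g i = Q.
      complex_of_real (p i) * (g i * \<rho> * g i) $$ (a,b))"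
    using g finite_Qn by (intro sum.group[symmetric]) (auto simp: Qn_star_def)
  also have "\<dots> = (\<Sum>Q\<in>Qn_star n. complex_of_real (\<Sum>i | i < K \<and> g i = Q. p i) * (Q * \<rho> * Q) $$ (a,b))"
    by (intro sum.cong refl) (simp add: sum_distrib_right)
  also have "\<dots> = 1 / (4 ^ n - 1) * (\<Sum>Q\<in>Qn_star n. (Q * \<rho> * Q) $$ (a,b))"
    by (simp add: weight sum_distrib_left)
  finally show ?thesis unfolding V_def .
qed

lemma pauli_mixing_average_identity:
  assumes mixing: "pauli_mixing n K p U" and \<rho>: "\<rho> \<in> carrier_mat (2 ^ n) (2 ^ n)"
  shows "(\<Sum>i<K. complex_of_real (p i) *
      ((adj (U i) * 1\<^sub>m (2 ^ n) * U i) * \<rho> * (adj (U i) * 1\<^sub>m (2 ^ n) * U i)) $$ (a,b))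
    = \<rho> $$ (a,b)"
proof -
  have "adj (U i) * 1\<^sub>m (2 ^ n) * U i = 1\<^sub>m (2 ^ n)" if "i < K" for i
  proof -
    have "unitary_mat (2 ^ n) (U i)" using mixing that unfolding pauli_mixing_def by blast
    then show ?thesis
      using unitary_adj_mult_self carrier_matD unfolding unitary_mat_def by fastforce
  qed
  then have "(\<Sum>i<K. complex_of_real (p i) *
        ((adj (U i) * 1\<^sub>m (2 ^ n) * U i) * \<rho> * (adj (U i) * 1\<^sub>m (2 ^ n) * U i)) $$ (a,b))
      = (\<Sum>i<K. complex_of_real (p i) * \<rho> $$ (a,b))"
    using carrier_matD[OF \<rho>] by simp
  also have "\<dots> = \<rho> $$ (a,b)"
    using mixing unfolding pauli_mixing_def by (simp flip: sum_distrib_right of_real_sum)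
  finally show ?thesis .
qed

lemma pauli_channel_coeffs_sum_Qn_star:
  assumes "is_pauli_channel_coeffs n chi"
  shows "(\<Sum>P\<in>Qn_star n. complex_of_real (chi P)) = 1 - complex_of_real (chi (1\<^sub>m (2 ^ n)))"
proof -
  have "(\<Sum>P\<in>Qn_star n. chi P) = 1 - chi (1\<^sub>m (2 ^ n))"
    using assms sum.remove[OF finite_Qn[of n] one_in_Qn, of chi]
    unfolding is_pauli_channel_coeffs_def Qn_star_def by simp
  then show ?thesis by (metis of_real_1 of_real_diff of_real_sum)
qed

theorem lemma7:
  fixes n K :: nat and chi :: "complex mat \<Rightarrow> real"
    and p :: "nat \<Rightarrow> real" and U :: "nat \<Rightarrow> complex mat"
  assumes "n \<ge> 1"
    and "is_pauli_channel_coeffs n chi"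
    and "pauli_mixing n K p U"
  shows "\<forall>\<rho>\<in>carrier_mat (2^n) (2^n).
           twirl n K p U (pauli_channel n chi) \<rho>
         = depol n (ent_fid n (pauli_channel n chi)) \<rho>"
proof
  fix \<rho> :: "complex mat" assume \<rho>: "\<rho> \<in> carrier_mat (2 ^ n) (2 ^ n)"
  let ?q = "complex_of_real (chi (1\<^sub>m (2 ^ n)))"
  let ?S = "\<lambda>a b. \<Sum>Q\<in>Qn_star n. (Q * \<rho> * Q) $$ (a,b)"
  have U: "\<And>i. i < K \<Longrightarrow> U i \<in> carrier_mat (2 ^ n) (2 ^ n)"
    using assms(3) unfolding pauli_mixing_def unitary_mat_def by blast
  show "twirl n K p U (pauli_channel n chi) \<rho> = depol n (ent_fid n (pauli_channel n chi)) \<rho>"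
  proof (rule eq_matI)
    fix a b assume "a < dim_row (depol n (ent_fid n (pauli_channel n chi)) \<rho>)"
      "b < dim_col (depol n (ent_fid n (pauli_channel n chi)) \<rho>)"
    then have ab: "a < 2 ^ n" "b < 2 ^ n" using \<rho> by (auto simp: depol_def)
    have "twirl n K p U (pauli_channel n chi) \<rho> $$ (a,b) = (\<Sum>P\<in>Qn n. complex_of_real (chi P) *
        (\<Sum>i<K. complex_of_real (p i) * ((adj (U i) * P * U i) * \<rho> * (adj (U i) * P * U i)) $$ (a,b)))"
      by (rule twirl_pauli_channel_index[OF U \<rho> ab])
    also have "\<dots> = ?q * \<rho> $$ (a,b)
        + (\<Sum>P\<in>Qn_star n. complex_of_real (chi P) * (1 / (4 ^ n - 1) * ?S a b))"
      unfolding sum.remove[OF finite_Qn one_in_Qn]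
      by (simp add: pauli_mixing_average_identity[OF assms(3) \<rho>]
          pauli_mixing_average[OF assms(3) _ \<rho>] flip: Qn_star_def)
    also have "\<dots> = ?q * \<rho> $$ (a,b) + (1 - ?q) * (1 / (4 ^ n - 1) * ?S a b)"
      unfolding sum_distrib_right[symmetric] pauli_channel_coeffs_sum_Qn_star[OF assms(2)] ..
    also have "\<dots> = depol n (ent_fid n (pauli_channel n chi)) \<rho> $$ (a,b)"
      using \<rho> ab by (simp add: depol_def ent_fid_pauli_channel)
    finally show "twirl n K p U (pauli_channel n chi) \<rho> $$ (a,b)
        = depol n (ent_fid n (pauli_channel n chi)) \<rho> $$ (a,b)" .
  qed (use \<rho> in \<open>simp_all add: twirl_def depol_def\<close>)
qed

end
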